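(* Fix $n\ge2$ and a point $H\in\mathcal S_n$, with first currents $H^{(1)},\dots,H^{(n-1)}$. Define the stationary Faà di Bruno basis $\{F^{(j)}\}_{j\in\mathbb Z}$ by $F^{(a)}=H^{(a)}$ for $a=0,\dots,n-1$ (with $H^{(0)}=1$) and $F^{(j+n)}=z^nF^{(j)}$ for all $j\in\mathbb Z$. Let $\widetilde{\mathcal H}_+$ be the span of $\{F^{(j)}\}_{j\ge0}$ and $\widetilde{\mathcal H}_-$ the space of (possibly infinite) combinations of $\{F^{(j)}\}_{j<0}$, so $\mathcal L=\widetilde{\mathcal H}_+\oplus\widetilde{\mathcal H}_-$ with projections $\tilde\pi_\pm$. Then for every $j\ge0$ the current $H^{(j)}$ of the point $H$ equals $\tilde\pi_+(z^j)$, and the restriction of the central system vector field $X_j$ to $\mathcal S_n$, written in the coordinates $(H^{(1)},\dots,H^{(n-1)})$, is $$\frac{\partial H^{(a)}}{\partial t_j}=-\tilde\pi_-\big(H^{(a)}\,\tilde\pi_+(z^j)\big),\qquad a=1,\dots,n-1,\ j\ge1.$$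
   Context: Let $z$ be a formal variable and $\mathcal L$ the space of formal Laurent series $\sum_{j\le N} l_j z^j$ (finitely many positive powers of $z$). Let $\mathcal H$ be the set of sequences $H=(H^{(k)})_{k\ge0}$ of elements of $\mathcal L$ with $H^{(0)}=1$ and, for $k\ge1$, $H^{(k)}=z^k+\sum_{l\ge1}H^k_l z^{-l}$; the coefficients $H^k_l$ are coordinates on $\mathcal H$, and we set $H^0_l=0$. The central system (CS) is the family of vector fields $X_j$, $j\ge1$, on $\mathcal H$, with associated times $t_j$, defined by $$\frac{\partial H^{(k)}}{\partial t_j}=H^{(j+k)}-H^{(j)}H^{(k)}+\sum_{l=1}^{k}H^j_lH^{(k-l)}+\sum_{l=1}^{j}H^k_lH^{(j-l)},\qquad k\ge0.$$ $\mathcal S_n=\{H\in\mathcal H: X_n(H)=0,\ H^{(n)}=z^n\}$; it is invariant under all $X_j$ and every point of it is determined by $(H^{(1)},\dots,H^{(n-1)})$. *)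

theory Defs
  imports "HOL-Computational_Algebra.Formal_Laurent_Series"
begin

(* The space L of formal Laurent series in z with finitely many positive powers of z
   is modelled by complex fls (Laurent series in X with finitely many negative powers)
   via z = X^{-1}, i.e. z = fls_X_inv. *)

definition zvar :: "complex fls" where
  "zvar = fls_X_inv"

definition zpow :: "int \<Rightarrow> complex fls" where
  "zpow m = (if 0 \<le> m then zvar ^ nat m else fls_X ^ nat (- m))"

definition zcoeff :: "complex fls \<Rightarrow> int \<Rightarrow> complex" where
  "zcoeff f j = fls_nth f (- j)"

definition inH :: "(nat \<Rightarrow> complex fls) \<Rightarrow> bool" where
  "inH H \<longleftrightarrow> H 0 = 1 \<and>
     (\<forall>k\<ge>1. \<forall>j::int. 0 \<le> j \<longrightarrow> zcoeff (H k) j = (if j = int k then 1 else 0))"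

(* coordinates H^k_l  (so H^0_l = 0 on \<H>, since H^(0) = 1) *)
definition Hc :: "(nat \<Rightarrow> complex fls) \<Rightarrow> nat \<Rightarrow> nat \<Rightarrow> complex" where
  "Hc H k l = (if k = 0 then 0 else zcoeff (H k) (- int l))"

(* right-hand side of the central system: component k of X_j at H *)
definition CS :: "(nat \<Rightarrow> complex fls) \<Rightarrow> nat \<Rightarrow> nat \<Rightarrow> complex fls" where
  "CS H j k = H (j + k) - H j * H k
      + (\<Sum>l = 1..k. fls_const (Hc H j l) * H (k - l))
      + (\<Sum>l = 1..j. fls_const (Hc H k l) * H (j - l))"

definition inS :: "nat \<Rightarrow> (nat \<Rightarrow> complex fls) \<Rightarrow> bool" where
  "inS n H \<longleftrightarrow> inH H \<and> (\<forall>k. CS H n k = 0) \<and> H n = zpow (int n)"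

definition Fdb :: "nat \<Rightarrow> (nat \<Rightarrow> complex fls) \<Rightarrow> int \<Rightarrow> complex fls" where
  "Fdb n H j = zpow (int n * (j div int n)) * H (nat (j mod int n))"

definition Hplus :: "nat \<Rightarrow> (nat \<Rightarrow> complex fls) \<Rightarrow> complex fls set" where
  "Hplus n H = {f. \<exists>S c. finite S \<and> (\<forall>j\<in>S. 0 \<le> j) \<and>
                        f = (\<Sum>j\<in>S. fls_const (c j) * Fdb n H j)}"

(* possibly infinite combinations of F^(j), j < 0, taken coefficientwise
   (only finitely many F^(j), j<0, contribute to a given coefficient) *)
definition Hminus :: "nat \<Rightarrow> (nat \<Rightarrow> complex fls) \<Rightarrow> complex fls set" where
  "Hminus n H = {f. \<exists>c :: int \<Rightarrow> complex. \<forall>m.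
       zcoeff f m = (\<Sum>j\<in>{j. j < 0 \<and> zcoeff (Fdb n H j) m \<noteq> 0}. c j * zcoeff (Fdb n H j) m)}"

definition piplus :: "nat \<Rightarrow> (nat \<Rightarrow> complex fls) \<Rightarrow> complex fls \<Rightarrow> complex fls" where
  "piplus n H f = (THE g. g \<in> Hplus n H \<and> f - g \<in> Hminus n H)"

definition piminus :: "nat \<Rightarrow> (nat \<Rightarrow> complex fls) \<Rightarrow> complex fls \<Rightarrow> complex fls" where
  "piminus n H f = f - piplus n H f"

end

theory Submission
  imports Defs
begin

(* The Faa di Bruno basis is unitriangular in powers of z: F^(j) = z^j + lower powers.
   Hence the infinite combinations of the F^(j), j < 0, are exactly the series without
   nonnegative powers of z (forward substitution), and L = H_+ (+) H_- follows by
   cancelling leading terms.  On S_n, the equations X_n(H^(k)) = 0 and H^(n) = z^n give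
   H^(n+k) = z^n H^(k) - (sum of H^(n-l)), so every current lies in H_+; as z^j - H^(j)
   has only negative powers, pi_+(z^j) = H^(j).  Finally, in X_j(H^(a)) the terms other
   than -H^(j) H^(a) lie in H_+ and equal the nonnegative part of H^(a) H^(j), so
   X_j(H^(a)) = -pi_-(H^(a) pi_+(z^j)). *)

lemma zpow_conv_shift: "zpow p = fls_shift p 1"
  by (auto simp: zpow_def zvar_def fls_X_inv_power_conv_shift_1 fls_X_power_conv_shift_1)

lemma zpow_add: "zpow (p + q) = zpow p * zpow q"
  by (simp add: zpow_conv_shift fls_shifted_times_simps add.commute)

lemma zpow_0 [simp]: "zpow 0 = 1"
  by (simp add: zpow_def)

lemma zcoeff_zpow_mult: "zcoeff (zpow p * f) m = zcoeff f (m - p)"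
  by (simp add: zpow_conv_shift fls_shifted_times_simps zcoeff_def)

lemma zcoeff_zpow: "zcoeff (zpow p) m = (if m = p then 1 else 0)"
  using zcoeff_zpow_mult[of p 1 m] by (simp add: zcoeff_def)

lemma zcoeff_0 [simp]: "zcoeff 0 m = 0"
  and zcoeff_add [simp]: "zcoeff (f + g) m = zcoeff f m + zcoeff g m"
  and zcoeff_diff [simp]: "zcoeff (f - g) m = zcoeff f m - zcoeff g m"
  and zcoeff_const_mult [simp]: "zcoeff (fls_const c * f) m = c * zcoeff f m"
  and zcoeff_sum: "zcoeff (\<Sum>x\<in>A. s x) m = (\<Sum>x\<in>A. zcoeff (s x) m)"
  by (simp_all add: zcoeff_def fls_nth_sum)

lemma zcoeff_eq_0_above_subdegree: "- fls_subdegree f < m \<Longrightarrow> zcoeff f m = 0"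
  by (simp add: zcoeff_def)

lemma zcoeff_H:
  assumes "inH H"
  shows "zcoeff (H k) m =
    (if m < 0 then Hc H k (nat (- m)) else if m = int k then 1 else 0)"
  using assms by (cases "k = 0") (auto simp: inH_def Hc_def zcoeff_def)

subsection \<open>Series without nonnegative powers of z\<close>

definition neg_series :: "complex fls \<Rightarrow> bool" where
  "neg_series f \<longleftrightarrow> (\<forall>m\<ge>0. zcoeff f m = 0)"

lemma neg_series_diff: "neg_series f \<Longrightarrow> neg_series g \<Longrightarrow> neg_series (f - g)"
  by (simp add: neg_series_def)

lemma neg_series_diff_commute: "neg_series (f - g) \<longleftrightarrow> neg_series (g - f)"
  by (auto simp: neg_series_def)

lemma neg_series_subdegree:
  assumes "neg_series f" "f \<noteq> 0"
  shows "1 \<le> fls_subdegree f"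
proof (rule fls_subdegree_geI[OF assms(2)])
  fix k :: int
  assume "k < 1"
  then have "zcoeff f (- k) = 0"
    using assms(1) by (simp add: neg_series_def)
  then show "fls_nth f k = 0"
    by (simp add: zcoeff_def)
qed

lemma neg_series_mult:
  assumes "neg_series f" "neg_series g"
  shows "neg_series (f * g)"
proof (cases "f = 0 \<or> g = 0")
  case False
  then have "2 \<le> fls_subdegree f + fls_subdegree g"
    using assms neg_series_subdegree[of f] neg_series_subdegree[of g] by simp
  then show ?thesis
    by (auto simp: neg_series_def zcoeff_def intro!: fls_times_nth_eq0)
qed (auto simp: neg_series_def zcoeff_def)

lemma neg_series_H_minus_zpow: "inH H \<Longrightarrow> neg_series (H k - zpow (int k))"
  by (simp add: neg_series_def zcoeff_H zcoeff_zpow)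

subsection \<open>Unitriangular families\<close>

definition unitriangular :: "(int \<Rightarrow> complex fls) \<Rightarrow> bool" where
  "unitriangular F \<longleftrightarrow> (\<forall>j. zcoeff (F j) j = 1 \<and> (\<forall>m>j. zcoeff (F j) m = 0))"

lemma unitriangular_diag: "unitriangular F \<Longrightarrow> zcoeff (F j) j = 1"
  and unitriangular_above: "unitriangular F \<Longrightarrow> j < m \<Longrightarrow> zcoeff (F j) m = 0"
  by (simp_all add: unitriangular_def)

lemma unitriangular_nonzero_le: "unitriangular F \<Longrightarrow> zcoeff (F j) m \<noteq> 0 \<Longrightarrow> m \<le> j"
  using unitriangular_above by (meson not_le)

lemma unitriangular_Fdb:
  assumes "inH H" "0 < n"
  shows "unitriangular (Fdb n H)"
  unfolding unitriangular_def
proof (intro allI conjI impI)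
  fix j m :: int
  define q r where "q = j div int n" and "r = j mod int n"
  have j: "j = int n * q + r" and r: "0 \<le> r"
    using assms(2) by (simp_all add: q_def r_def)
  have Fdb: "zcoeff (Fdb n H j) m = zcoeff (H (nat r)) (m - int n * q)" for m
    by (simp add: Fdb_def zcoeff_zpow_mult q_def r_def)
  show "zcoeff (Fdb n H j) j = 1"
    unfolding Fdb using assms(1) j r by (simp add: zcoeff_H)
  show "zcoeff (Fdb n H j) m = 0" if "j < m"
    unfolding Fdb using assms(1) j r that by (simp add: zcoeff_H)
qed

text \<open>Coordinates with respect to the F j, j < 0, by forward substitution in the unitriangular system.\<close>

function lower_coord :: "(int \<Rightarrow> complex fls) \<Rightarrow> complex fls \<Rightarrow> int \<Rightarrow> complex" where
  "lower_coord F f m = zcoeff f m - (\<Sum>j\<in>{m<..-1}. lower_coord F f j * zcoeff (F j) m)"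
  by auto
termination by (relation "measure (\<lambda>(F, f, m). nat (- m))") auto

declare lower_coord.simps [simp del]

lemma zcoeff_eq_lower_coord_sum:
  assumes "unitriangular F" "neg_series f"
  shows "zcoeff f m = (\<Sum>j\<in>{m..-1}. lower_coord F f j * zcoeff (F j) m)"
proof (cases "m < 0")
  case True
  then have "{m..-1} = insert m {m<..-1}"
    by auto
  then show ?thesis
    using unitriangular_diag[OF assms(1)] by (simp add: lower_coord.simps[of F f m])
next
  case False
  then show ?thesis
    using assms(2) by (simp add: neg_series_def)
qed

lemma neg_combination_iff_neg_series:
  assumes "unitriangular F"
  shows "(\<exists>c. \<forall>m. zcoeff f m =
            (\<Sum>j\<in>{j. j < 0 \<and> zcoeff (F j) m \<noteq> 0}. c j * zcoeff (F j) m))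
         \<longleftrightarrow> neg_series f"
proof
  assume "\<exists>c. \<forall>m. zcoeff f m = (\<Sum>j\<in>{j. j < 0 \<and> zcoeff (F j) m \<noteq> 0}. c j * zcoeff (F j) m)"
  moreover have "{j. j < 0 \<and> zcoeff (F j) m \<noteq> 0} = {}" if "0 \<le> m" for m
    using unitriangular_nonzero_le[OF assms] that by force
  ultimately show "neg_series f"
    by (auto simp: neg_series_def)
next
  assume f: "neg_series f"
  have "(\<Sum>j\<in>{j. j < 0 \<and> zcoeff (F j) m \<noteq> 0}. lower_coord F f j * zcoeff (F j) m)
        = (\<Sum>j\<in>{m..-1}. lower_coord F f j * zcoeff (F j) m)" for m
    using unitriangular_nonzero_le[OF assms] by (intro sum.mono_neutral_left) auto
  then show "\<exists>c. \<forall>m. zcoeff f m = (\<Sum>j\<in>{j. j < 0 \<and> zcoeff (F j) m \<noteq> 0}. c j * zcoeff (F j) m)"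
    using zcoeff_eq_lower_coord_sum[OF assms f] by (intro exI[of _ "lower_coord F f"]) simp
qed

lemma Hminus_iff_neg_series:
  assumes "inH H" "0 < n"
  shows "f \<in> Hminus n H \<longleftrightarrow> neg_series f"
  unfolding Hminus_def
  using neg_combination_iff_neg_series[OF unitriangular_Fdb[OF assms]] by simp

definition nonneg_span :: "(int \<Rightarrow> complex fls) \<Rightarrow> complex fls set" where
  "nonneg_span F = {f. \<exists>S c. finite S \<and> (\<forall>j\<in>S. 0 \<le> j) \<and> f = (\<Sum>j\<in>S. fls_const (c j) * F j)}"

lemma nonneg_span_0: "0 \<in> nonneg_span F"
  unfolding nonneg_span_def by (rule CollectI, rule exI[of _ "{}"]) auto

lemma nonneg_span_basis: "0 \<le> j \<Longrightarrow> F j \<in> nonneg_span F"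
  unfolding nonneg_span_def by (rule CollectI, rule exI[of _ "{j}"], rule exI[of _ "\<lambda>_. 1"]) auto

lemma nonneg_span_const_mult:
  assumes "f \<in> nonneg_span F"
  shows "fls_const d * f \<in> nonneg_span F"
proof -
  obtain S c where S: "finite S" "\<forall>j\<in>S. 0 \<le> j" and f: "f = (\<Sum>j\<in>S. fls_const (c j) * F j)"
    using assms by (auto simp: nonneg_span_def)
  have "fls_const d * f = (\<Sum>j\<in>S. fls_const (d * c j) * F j)"
    by (simp add: f sum_distrib_left mult.assoc flip: fls_const_mult_const)
  then show ?thesis
    using S unfolding nonneg_span_def by (intro CollectI exI[of _ S] exI[of _ "\<lambda>j. d * c j"]) simp
qed

lemma nonneg_span_add:
  assumes "f \<in> nonneg_span F" "g \<in> nonneg_span F"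
  shows "f + g \<in> nonneg_span F"
proof -
  obtain S c where S: "finite S" "\<forall>j\<in>S. 0 \<le> j" and f: "f = (\<Sum>j\<in>S. fls_const (c j) * F j)"
    using assms(1) by (auto simp: nonneg_span_def)
  obtain T d where T: "finite T" "\<forall>j\<in>T. 0 \<le> j" and g: "g = (\<Sum>j\<in>T. fls_const (d j) * F j)"
    using assms(2) by (auto simp: nonneg_span_def)
  define c' d' where "c' j = (if j \<in> S then c j else 0)" and "d' j = (if j \<in> T then d j else 0)"
    for j
  have "f = (\<Sum>j\<in>S \<union> T. fls_const (c' j) * F j)" "g = (\<Sum>j\<in>S \<union> T. fls_const (d' j) * F j)"
    unfolding f g using S T by (auto simp: c'_def d'_def intro!: sum.mono_neutral_cong_left)
  then have "f + g = (\<Sum>j\<in>S \<union> T. fls_const (c' j + d' j) * F j)"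
    by (simp add: distrib_right sum.distrib flip: fls_plus_const)
  then show ?thesis
    using S T unfolding nonneg_span_def
    by (intro CollectI exI[of _ "S \<union> T"] exI[of _ "\<lambda>j. c' j + d' j"]) auto
qed

lemma nonneg_span_diff: "f \<in> nonneg_span F \<Longrightarrow> g \<in> nonneg_span F \<Longrightarrow> f - g \<in> nonneg_span F"
  using nonneg_span_add[of f F "fls_const (-1) * g"] nonneg_span_const_mult[of g F "-1"]
  by (simp flip: fls_const_mult_const)

lemma nonneg_span_sum:
  "(\<And>x. x \<in> A \<Longrightarrow> f x \<in> nonneg_span F) \<Longrightarrow> (\<Sum>x\<in>A. f x) \<in> nonneg_span F"
  by (induction A rule: infinite_finite_induct) (auto simp: nonneg_span_0 nonneg_span_add)

lemma nonneg_span_shift: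
  assumes "\<And>j. zpow p * F j = F (j + p)" "0 \<le> p" "f \<in> nonneg_span F"
  shows "zpow p * f \<in> nonneg_span F"
proof -
  obtain S c where S: "finite S" "\<forall>j\<in>S. 0 \<le> j" and f: "f = (\<Sum>j\<in>S. fls_const (c j) * F j)"
    using assms(3) by (auto simp: nonneg_span_def)
  have "zpow p * f = (\<Sum>j\<in>S. fls_const (c j) * F (j + p))"
    by (simp add: f sum_distrib_left ac_simps flip: assms(1))
  also have "\<dots> = (\<Sum>j\<in>(\<lambda>j. j + p) ` S. fls_const (c (j - p)) * F j)"
    by (simp add: sum.reindex)
  finally show ?thesis
    using S assms(2) unfolding nonneg_span_def
    by (intro CollectI exI[of _ "(\<lambda>j. j + p) ` S"] exI[of _ "\<lambda>j. c (j - p)"]) auto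
qed

text \<open>The top basis element F M with nonzero coefficient is the only one contributing to z^M, and M \<ge> 0.\<close>

lemma nonneg_span_neg_series_eq_0:
  assumes F: "unitriangular F" and g: "g \<in> nonneg_span F" "neg_series g"
  shows "g = 0"
proof -
  obtain S c where S: "finite S" "\<forall>j\<in>S. 0 \<le> j" and g_eq: "g = (\<Sum>j\<in>S. fls_const (c j) * F j)"
    using g(1) by (auto simp: nonneg_span_def)
  have "c j = 0" if "j \<in> S" for j
  proof (rule ccontr)
    assume "c j \<noteq> 0"
    define M where "M = Max {j\<in>S. c j \<noteq> 0}"
    have M: "M \<in> S" "c M \<noteq> 0" "\<And>j. j \<in> S \<Longrightarrow> c j \<noteq> 0 \<Longrightarrow> j \<le> M"
      using Max_in[of "{j\<in>S. c j \<noteq> 0}"] Max_ge[of "{j\<in>S. c j \<noteq> 0}"] S(1) \<open>j \<in> S\<close> \<open>c j \<noteq> 0\<close>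
      by (auto simp: M_def)
    have "zcoeff g M = (\<Sum>j\<in>S. c j * zcoeff (F j) M)"
      by (simp add: g_eq zcoeff_sum)
    also have "\<dots> = (\<Sum>j\<in>{M}. c j * zcoeff (F j) M)"
    proof (intro sum.mono_neutral_right ballI)
      fix i
      assume "i \<in> S - {M}"
      then show "c i * zcoeff (F i) M = 0"
        using M(3)[of i] unitriangular_above[OF F, of i M] by (cases "c i = 0") auto
    qed (use S(1) M in auto)
    also have "\<dots> = c M"
      by (simp add: unitriangular_diag[OF F])
    finally have "zcoeff g M = c M" .
    moreover have "zcoeff g M = 0"
      using g(2) S M by (simp add: neg_series_def)
    ultimately show False
      using M by simp
  qed
  then show ?thesis
    by (simp add: g_eq)
qed

lemma nonneg_span_approx_bounded:
  assumes F: "unitriangular F" and f: "\<forall>m\<ge>int N. zcoeff f m = 0"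
  shows "\<exists>g\<in>nonneg_span F. neg_series (f - g)"
  using f
proof (induction N arbitrary: f)
  case 0
  then show ?case
    by (auto simp: neg_series_def intro!: bexI[of _ 0] nonneg_span_0)
next
  case (Suc N)
  define f' where "f' = f - fls_const (zcoeff f (int N)) * F (int N)"
  have "zcoeff f' m = 0" if "int N \<le> m" for m
    using that Suc.prems unitriangular_diag[OF F] unitriangular_above[OF F, of "int N" m]
    by (cases "m = int N") (auto simp: f'_def)
  then obtain g' where "g' \<in> nonneg_span F" "neg_series (f' - g')"
    using Suc.IH by blast
  then show ?case
    by (intro bexI[of _ "g' + fls_const (zcoeff f (int N)) * F (int N)"])
      (auto simp: f'_def diff_diff_eq add.commute
        intro!: nonneg_span_add nonneg_span_const_mult nonneg_span_basis)
qed

lemma nonneg_span_decomposition: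
  assumes F: "unitriangular F"
  shows "\<exists>!g. g \<in> nonneg_span F \<and> neg_series (f - g)"
proof -
  have "\<forall>m\<ge>int (nat (1 - fls_subdegree f)). zcoeff f m = 0"
    by (auto intro: zcoeff_eq_0_above_subdegree)
  then obtain g where g: "g \<in> nonneg_span F" "neg_series (f - g)"
    using nonneg_span_approx_bounded[OF F] by blast
  moreover have "g' = g" if "g' \<in> nonneg_span F" "neg_series (f - g')" for g'
  proof -
    have "neg_series (g - g')"
      using neg_series_diff[OF that(2) g(2)] by simp
    then show ?thesis
      using nonneg_span_neg_series_eq_0[OF F nonneg_span_diff[OF g(1) that(1)]] by simp
  qed
  ultimately show ?thesis
    by blast
qed

subsection \<open>The decomposition on the stationary set\<close>

lemma Hplus_eq_nonneg_span: "Hplus n H = nonneg_span (Fdb n H)"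
  by (simp add: Hplus_def nonneg_span_def)

lemma Hplus_Hminus_decomposition:
  assumes "inH H" "0 < n"
  shows "\<exists>!g. g \<in> Hplus n H \<and> f - g \<in> Hminus n H"
  using nonneg_span_decomposition[OF unitriangular_Fdb[OF assms], of f]
  by (simp add: Hplus_eq_nonneg_span Hminus_iff_neg_series[OF assms])

lemma piplus_eqI:
  assumes "inH H" "0 < n" "g \<in> Hplus n H" "neg_series (f - g)"
  shows "piplus n H f = g"
  unfolding piplus_def
proof (rule the1_equality)
  show "\<exists>!g. g \<in> Hplus n H \<and> f - g \<in> Hminus n H"
    using Hplus_Hminus_decomposition[OF assms(1,2)] .
  show "g \<in> Hplus n H \<and> f - g \<in> Hminus n H"
    using assms by (simp add: Hminus_iff_neg_series)
qed

lemma zpow_mult_Fdb: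
  assumes "0 < n"
  shows "zpow (int n) * Fdb n H j = Fdb n H (j + int n)"
proof -
  have "(j + int n) div int n = j div int n + 1" "(j + int n) mod int n = j mod int n"
    using assms by simp_all
  then show ?thesis
    by (simp add: Fdb_def mult.assoc distrib_left add.commute flip: zpow_add)
qed

lemma H_stationary_recursion:
  assumes "inS n H"
  shows "H (n + k) = zpow (int n) * H k - (\<Sum>l = 1..n. fls_const (Hc H k l) * H (n - l))"
proof -
  have Hn: "H n = zpow (int n)" and "CS H n k = 0"
    using assms by (simp_all add: inS_def)
  moreover have "Hc H n l = 0" if "1 \<le> l" for l
    using that by (simp add: Hc_def Hn zcoeff_zpow)
  ultimately show ?thesis
    by (simp add: CS_def algebra_simps)
qed

lemma H_in_Hplus:
  assumes "inS n H" "0 < n"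
  shows "H k \<in> Hplus n H"
proof (induction k rule: less_induct)
  case (less k)
  have low: "H i \<in> Hplus n H" if "i < n" for i
    using that nonneg_span_basis[of "int i" "Fdb n H"] by (simp add: Hplus_eq_nonneg_span Fdb_def)
  show ?case
  proof (cases "k < n")
    case False
    then obtain k' where k: "k = n + k'"
      using le_Suc_ex not_less by blast
    have "zpow (int n) * H k' \<in> Hplus n H"
      using less[of k'] assms(2) k
      by (simp add: Hplus_eq_nonneg_span nonneg_span_shift zpow_mult_Fdb)
    moreover have "(\<Sum>l = 1..n. fls_const (Hc H k' l) * H (n - l)) \<in> Hplus n H"
      using low assms(2) unfolding Hplus_eq_nonneg_span
      by (auto intro!: nonneg_span_sum nonneg_span_const_mult)
    ultimately show ?thesis
      unfolding k H_stationary_recursion[OF assms(1)] Hplus_eq_nonneg_span by (rule nonneg_span_diff)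
  qed (use low in blast)
qed

lemma piplus_zpow:
  assumes "inS n H" "0 < n"
  shows "piplus n H (zpow (int j)) = H j"
proof (rule piplus_eqI)
  show "inH H"
    using assms(1) by (simp add: inS_def)
  then show "neg_series (zpow (int j) - H j)"
    using neg_series_H_minus_zpow neg_series_diff_commute by blast
qed (use assms H_in_Hplus in auto)

subsection \<open>The central system on the stationary set\<close>

lemma zcoeff_sum_const_mult_H:
  assumes "inH H" "0 \<le> m"
  shows "zcoeff (\<Sum>l = 1..a. fls_const (c l) * H (a - l)) m =
    (if m < int a then c (nat (int a - m)) else 0)"
proof -
  have "zcoeff (\<Sum>l = 1..a. fls_const (c l) * H (a - l)) m =
      (\<Sum>l\<in>{1..a}. if l = nat (int a - m) then c l else 0)"
    unfolding zcoeff_sum zcoeff_const_mult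
  proof (rule sum.cong)
    fix l
    assume "l \<in> {1..a}"
    then show "c l * zcoeff (H (a - l)) m = (if l = nat (int a - m) then c l else 0)"
      using assms by (auto simp: zcoeff_H)
  qed simp
  also have "\<dots> = (if m < int a then c (nat (int a - m)) else 0)"
    using assms(2) by (subst sum.delta) auto
  finally show ?thesis .
qed

text \<open>With N k = H k - z^k, we have H j H a = z^(j+a) + z^j N a + z^a N j + N j N a; the two sums
  in the central system reproduce the nonnegative parts of z^a N j and z^j N a.\<close>

lemma CS_neg_series:
  assumes H: "inH H"
  shows "neg_series (CS H j a)"
  unfolding neg_series_def
proof (intro allI impI)
  fix m :: int
  assume m: "0 \<le> m"
  define N where "N k = H k - zpow (int k)" for k
  have prod: "H j * H a = zpow (int j + int a) + zpow (int j) * N a + zpow (int a) * N j + N j * N a"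
    by (simp add: N_def algebra_simps zpow_add)
  have "zcoeff (N j * N a) m = 0"
    using neg_series_mult[OF neg_series_H_minus_zpow[OF H] neg_series_H_minus_zpow[OF H]] m
    by (simp add: neg_series_def N_def)
  moreover have "zcoeff (zpow (int p) * N k) m = (if m < int p then Hc H k (nat (int p - m)) else 0)"
    for p k
    using m H by (simp add: zcoeff_zpow_mult N_def zcoeff_H zcoeff_zpow)
  ultimately show "zcoeff (CS H j a) m = 0"
    unfolding CS_def prod zcoeff_add zcoeff_diff zcoeff_sum_const_mult_H[OF H m]
    using m H by (simp add: zcoeff_H zcoeff_zpow)
qed

lemma CS_eq_uminus_piminus:
  assumes S: "inS n H" and n: "0 < n"
  shows "CS H j a = - piminus n H (H a * piplus n H (zpow (int j)))"
proof -
  have H: "inH H"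
    using S by (simp add: inS_def)
  define R where "R = H (j + a) + (\<Sum>l = 1..a. fls_const (Hc H j l) * H (a - l))
    + (\<Sum>l = 1..j. fls_const (Hc H a l) * H (j - l))"
  have CS: "CS H j a = R - H a * H j"
    by (simp add: CS_def R_def algebra_simps)
  have "R \<in> Hplus n H"
    using H_in_Hplus[OF S n, unfolded Hplus_eq_nonneg_span]
    unfolding R_def Hplus_eq_nonneg_span
    by (intro nonneg_span_add nonneg_span_sum nonneg_span_const_mult)
  moreover have "neg_series (H a * H j - R)"
    using CS_neg_series[OF H, of j a] neg_series_diff_commute by (simp add: CS)
  ultimately have "piplus n H (H a * H j) = R"
    using piplus_eqI[OF H n] by blast
  then show ?thesis
    by (simp add: piminus_def CS piplus_zpow[OF S n])
qed

theorem mainTheorem9: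
  fixes n :: nat and H :: "nat \<Rightarrow> complex fls"
  assumes "n \<ge> 2" and "inS n H"
  shows "(\<forall>f. \<exists>!g. g \<in> Hplus n H \<and> f - g \<in> Hminus n H)
         \<and> (\<forall>j. H j = piplus n H (zpow (int j)))
         \<and> (\<forall>a\<in>{1..n-1}. \<forall>j\<ge>1.
               CS H j a = - piminus n H (H a * piplus n H (zpow (int j))))"
proof -
  have H: "inH H" and n: "0 < n"
    using assms by (auto simp: inS_def)
  show ?thesis
    using Hplus_Hminus_decomposition[OF H n] piplus_zpow[OF assms(2) n]
      CS_eq_uminus_piminus[OF assms(2) n] by simp
qed

end
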